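(* In the standing setting, assume (MP). Let $\beta$ be the Bellman strategy. Then for every player strategy $s$: $\mathbb E_\beta[U]=\varphi^v(0,\sigma^v(0))\ge\mathbb E_s[U]$, and for every $t\in\{1,\dots,\overline R\}$ and every admissible history $h_t=(u_0,\delta_0,\dots,u_{t-1},\delta_{t-1})$, $$\mathbb E_\beta[U\mid h_t]=\varphi^v(t,u_{t-1},\delta_{t-1})\ge \mathbb E_s[U\mid h_t].$$
   Context: Standing setting. Integers $n\ge2$, $m\ge1$; $N:=(n-1)m$. Reals $p_{\mathrm{init}}\ge0$, $\Delta P>0$; the price at round $t\ge0$ is $p_t:=p_{\mathrm{init}}+t\Delta P$. The player's valuation $v:\{0,\dots,m\}\to[0,\infty)$ satisfies $v(0)=0$ and is non-decreasing and concave. $\overline R:=\lceil (v(1)-p_{\mathrm{init}})/\Delta P\rceil$, assumed $\ge1$. For $t\ge0$, $\sigma^v(t):=\min\operatorname{argmax}_{0\le u\le m}(v(u)-up_t)$. The opponent is given by random variables $Z_1\ge Z_2\ge\dots\ge Z_N\ge0$ (a.s.) on a probability space $(\Omega,\mathcal F,\mathbb P)$; its demand at price $p$ is $\delta(p):=\sum_{j=1}^N\mathbf 1\{Z_j>p\}$. For $t\ge1$ fix transition kernels $K_t(\delta'\mid\delta)$ ($\delta,\delta'\in\{0,\dots,N\}$), each $K_t(\cdot\mid\delta)$ a probability on $\{0,\dots,\delta\}$, with $K_t(\delta'\mid\delta)=\mathbb P(\delta(p_t)=\delta'\mid\delta(p_{t-1})=\delta)$ whenever $\mathbb P(\delta(p_{t-1})=\delta)>0$.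 Value function: for $t\in\{1,\dots,\overline R\}$, $k\in\{0,\dots,m\}$, $\delta\in\{0,\dots,N\}$: $\varphi^v(t,k,\delta):=v(k)-kp_{t-1}$ if $k+\delta\le m$; $:=\max_{0\le u\le k}\sum_{\delta'=0}^N K_t(\delta'\mid\delta)\varphi^v(t+1,u,\delta')$ if $k+\delta>m$ and $t<\overline R$; $:=0$ if $k+\delta>m$ and $t=\overline R$. Also $\varphi^v(0,k):=\max_{0\le u\le k}\sum_{\delta'}\mathbb P(\delta(p_0)=\delta')\varphi^v(1,u,\delta')$. Auction. A player strategy $s=(s_t)_{0\le t\le\overline R-1}$ assigns to each history $h_t=(u_0,\delta_0,\dots,u_{t-1},\delta_{t-1})$ a bid $u_t=s_t(h_t)\in\{0,\dots,u_{t-1}\}$, where $u_{-1}:=\sigma^v(0)$. Against the straightforward opponent, the opponent's round-$t$ demand is $\delta_t:=\delta(p_t)$. The auction ends at the first round $\tau\in\{0,\dots,\overline R-1\}$ with $u_\tau+\delta_\tau\le m$ and the player's utility is $U:=v(u_\tau)-u_\tau p_\tau$; if there is no such round, $U:=0$. A history $h_t$ ($t\ge1$) is admissible if $u_0\le\sigma^v(0)$, $u_r\le u_{r-1}$, $u_r+\delta_r>m$ for all $r\le t-2$, and $\mathbb P(\delta(p_r)=\delta_r\ \forall r\le t-1)>0$. $\mathbb E_s[U\mid h_t]$ denotes the conditional expectation of $U$ given $\{\delta(p_r)=\delta_r,\ r\le t-1\}$ when the player's bids at rounds $0,\dots,t-1$ are $u_0,\dots,u_{t-1}$ and at rounds $r\ge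 t$ are $s_r(h_r)$. Bellman strategy: $\beta^v(0,k):=\min\operatorname{argmax}_{0\le u\le k}\sum_{\delta'}\mathbb P(\delta(p_0)=\delta')\varphi^v(1,u,\delta')$, and for $t\in\{1,\dots,\overline R-1\}$, $\beta^v(t,k,\delta):=\min\operatorname{argmax}_{0\le u\le k}\sum_{\delta'}K_t(\delta'\mid\delta)\varphi^v(t+1,u,\delta')$. The Bellman strategy $\beta$ bids $u_0=\beta^v(0,\sigma^v(0))$ and $u_t=\beta^v(t,u_{t-1},\delta_{t-1})$ for $t\ge1$. Markov property (MP): $(\delta(p_t))_{0\le t\le\overline R}$ is a Markov chain. *)

theory Defs
  imports "HOL-Probability.Probability"
begin

definition price :: "real \<Rightarrow> real \<Rightarrow> nat \<Rightarrow> real" where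
  "price pinit dP t = pinit + real t * dP"

definition Rbar :: "(nat \<Rightarrow> real) \<Rightarrow> real \<Rightarrow> real \<Rightarrow> nat" where
  "Rbar v pinit dP = nat \<lceil>(v 1 - pinit) / dP\<rceil>"

definition minargmax :: "nat \<Rightarrow> (nat \<Rightarrow> real) \<Rightarrow> nat" where
  "minargmax k f = (LEAST u. u \<le> k \<and> (\<forall>u'\<le>k. f u' \<le> f u))"

definition sigma :: "(nat \<Rightarrow> real) \<Rightarrow> nat \<Rightarrow> real \<Rightarrow> real \<Rightarrow> nat \<Rightarrow> nat" where
  "sigma v m pinit dP t = minargmax m (\<lambda>u. v u - real u * price pinit dP t)"

definition demand :: "nat \<Rightarrow> (nat \<Rightarrow> 'a \<Rightarrow> real) \<Rightarrow> real \<Rightarrow> 'a \<Rightarrow> nat" where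
  "demand N Z p \<omega> = (\<Sum>j\<in>{1..N}. of_bool (p < Z j \<omega>))"

definition valuation_ok :: "(nat \<Rightarrow> real) \<Rightarrow> nat \<Rightarrow> bool" where
  "valuation_ok v m \<longleftrightarrow> v 0 = 0 \<and> (\<forall>u\<le>m. 0 \<le> v u)
     \<and> (\<forall>u<m. v u \<le> v (Suc u))
     \<and> (\<forall>u. 1 \<le> u \<longrightarrow> u < m \<longrightarrow> v (Suc u) - v u \<le> v u - v (u - 1))"

text \<open>Value function. K t d d' stands for K_t(d' | d).
  phiF with fuel f evaluates the value at round t, where t = Rbar - f.\<close>
fun phiF :: "(nat \<Rightarrow> real) \<Rightarrow> nat \<Rightarrow> nat \<Rightarrow> real \<Rightarrow> real \<Rightarrow> (nat \<Rightarrow> nat \<Rightarrow> nat \<Rightarrow> real)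
              \<Rightarrow> nat \<Rightarrow> nat \<Rightarrow> nat \<Rightarrow> nat \<Rightarrow> real" where
  "phiF v m N pinit dP K 0 t k d =
     (if k + d \<le> m then v k - real k * price pinit dP (t - 1) else 0)"
| "phiF v m N pinit dP K (Suc f) t k d =
     (if k + d \<le> m then v k - real k * price pinit dP (t - 1)
      else Max ((\<lambda>u. \<Sum>d'\<le>N. K t d d' * phiF v m N pinit dP K f (Suc t) u d') ` {..k}))"

definition phi :: "(nat \<Rightarrow> real) \<Rightarrow> nat \<Rightarrow> nat \<Rightarrow> real \<Rightarrow> real \<Rightarrow> (nat \<Rightarrow> nat \<Rightarrow> nat \<Rightarrow> real)
                    \<Rightarrow> nat \<Rightarrow> nat \<Rightarrow> nat \<Rightarrow> real" where
  "phi v m N pinit dP K t k d = phiF v m N pinit dP K (Rbar v pinit dP - t) t k d"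

definition p0 :: "'a measure \<Rightarrow> nat \<Rightarrow> (nat \<Rightarrow> 'a \<Rightarrow> real) \<Rightarrow> real \<Rightarrow> real \<Rightarrow> nat \<Rightarrow> real" where
  "p0 M N Z pinit dP d = measure M {\<omega> \<in> space M. demand N Z (price pinit dP 0) \<omega> = d}"

definition phi0 :: "'a measure \<Rightarrow> (nat \<Rightarrow> 'a \<Rightarrow> real) \<Rightarrow> (nat \<Rightarrow> real) \<Rightarrow> nat \<Rightarrow> nat \<Rightarrow> real \<Rightarrow> real
                    \<Rightarrow> (nat \<Rightarrow> nat \<Rightarrow> nat \<Rightarrow> real) \<Rightarrow> nat \<Rightarrow> real" where
  "phi0 M Z v m N pinit dP K k =
     Max ((\<lambda>u. \<Sum>d'\<le>N. p0 M N Z pinit dP d' * phi v m N pinit dP K 1 u d') ` {..k})"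

definition beta0 :: "'a measure \<Rightarrow> (nat \<Rightarrow> 'a \<Rightarrow> real) \<Rightarrow> (nat \<Rightarrow> real) \<Rightarrow> nat \<Rightarrow> nat \<Rightarrow> real \<Rightarrow> real
                    \<Rightarrow> (nat \<Rightarrow> nat \<Rightarrow> nat \<Rightarrow> real) \<Rightarrow> nat \<Rightarrow> nat" where
  "beta0 M Z v m N pinit dP K k =
     minargmax k (\<lambda>u. \<Sum>d'\<le>N. p0 M N Z pinit dP d' * phi v m N pinit dP K 1 u d')"

definition betaT :: "(nat \<Rightarrow> real) \<Rightarrow> nat \<Rightarrow> nat \<Rightarrow> real \<Rightarrow> real
                    \<Rightarrow> (nat \<Rightarrow> nat \<Rightarrow> nat \<Rightarrow> real) \<Rightarrow> nat \<Rightarrow> nat \<Rightarrow> nat \<Rightarrow> nat" where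
  "betaT v m N pinit dP K t k d =
     minargmax k (\<lambda>u. \<Sum>d'\<le>N. K t d d' * phi v m N pinit dP K (Suc t) u d')"

text \<open>Strategies: s t h is the bid at round t after history h = [(u_0,d_0),...,(u_(t-1),d_(t-1))].\<close>
type_synonym strategy = "nat \<Rightarrow> (nat \<times> nat) list \<Rightarrow> nat"

definition valid_strategy :: "(nat \<Rightarrow> real) \<Rightarrow> nat \<Rightarrow> real \<Rightarrow> real \<Rightarrow> strategy \<Rightarrow> bool" where
  "valid_strategy v m pinit dP s \<longleftrightarrow>
     (\<forall>t < Rbar v pinit dP. \<forall>h. length h = t \<longrightarrow>
        s t h \<le> (if t = 0 then sigma v m pinit dP 0 else fst (last h)))"

definition bellman :: "'a measure \<Rightarrow> (nat \<Rightarrow> 'a \<Rightarrow> real) \<Rightarrow> (nat \<Rightarrow> real) \<Rightarrow> nat \<Rightarrow> nat \<Rightarrow> real \<Rightarrow> real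
                    \<Rightarrow> (nat \<Rightarrow> nat \<Rightarrow> nat \<Rightarrow> real) \<Rightarrow> strategy" where
  "bellman M Z v m N pinit dP K t h =
     (if h = [] then beta0 M Z v m N pinit dP K (sigma v m pinit dP 0)
      else betaT v m N pinit dP K t (fst (last h)) (snd (last h)))"

text \<open>Play against the straightforward opponent: bids of rounds < length pre are
  taken from pre, later bids from s. hist r is the history h_r.\<close>
fun hist :: "nat \<Rightarrow> (nat \<Rightarrow> 'a \<Rightarrow> real) \<Rightarrow> real \<Rightarrow> real \<Rightarrow> nat list \<Rightarrow> strategy \<Rightarrow> 'a \<Rightarrow> nat
              \<Rightarrow> (nat \<times> nat) list" where
  "hist N Z pinit dP pre s \<omega> 0 = []"
| "hist N Z pinit dP pre s \<omega> (Suc r) =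
     (let h = hist N Z pinit dP pre s \<omega> r;
          u = (if r < length pre then pre ! r else s r h)
      in h @ [(u, demand N Z (price pinit dP r) \<omega>)])"

definition utility :: "nat \<Rightarrow> (nat \<Rightarrow> 'a \<Rightarrow> real) \<Rightarrow> (nat \<Rightarrow> real) \<Rightarrow> nat \<Rightarrow> real \<Rightarrow> real
                         \<Rightarrow> nat list \<Rightarrow> strategy \<Rightarrow> 'a \<Rightarrow> real" where
  "utility N Z v m pinit dP pre s \<omega> =
     (let H = hist N Z pinit dP pre s \<omega> (Rbar v pinit dP);
          stop = {r. r < Rbar v pinit dP \<and> fst (H ! r) + snd (H ! r) \<le> m}
      in if stop = {} then 0
         else (let \<tau> = Min stop in v (fst (H ! \<tau>)) - real (fst (H ! \<tau>)) * price pinit dP \<tau>))"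

definition expU :: "'a measure \<Rightarrow> nat \<Rightarrow> (nat \<Rightarrow> 'a \<Rightarrow> real) \<Rightarrow> (nat \<Rightarrow> real) \<Rightarrow> nat \<Rightarrow> real \<Rightarrow> real
                     \<Rightarrow> strategy \<Rightarrow> real" where
  "expU M N Z v m pinit dP s = (\<integral>\<omega>. utility N Z v m pinit dP [] s \<omega> \<partial>M)"

definition hist_event :: "'a measure \<Rightarrow> nat \<Rightarrow> (nat \<Rightarrow> 'a \<Rightarrow> real) \<Rightarrow> real \<Rightarrow> real
                          \<Rightarrow> (nat \<times> nat) list \<Rightarrow> 'a set" where
  "hist_event M N Z pinit dP h =
     {\<omega> \<in> space M. \<forall>r < length h. demand N Z (price pinit dP r) \<omega> = snd (h ! r)}"

definition condU :: "'a measure \<Rightarrow> nat \<Rightarrow> (nat \<Rightarrow> 'a \<Rightarrow> real) \<Rightarrow> (nat \<Rightarrow> real) \<Rightarrow> nat \<Rightarrow> real \<Rightarrow> real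
                     \<Rightarrow> strategy \<Rightarrow> (nat \<times> nat) list \<Rightarrow> real" where
  "condU M N Z v m pinit dP s h =
     (\<integral>\<omega>. indicator (hist_event M N Z pinit dP h) \<omega> * utility N Z v m pinit dP (map fst h) s \<omega> \<partial>M)
       / measure M (hist_event M N Z pinit dP h)"

definition admissible :: "'a measure \<Rightarrow> nat \<Rightarrow> (nat \<Rightarrow> 'a \<Rightarrow> real) \<Rightarrow> (nat \<Rightarrow> real) \<Rightarrow> nat \<Rightarrow> real \<Rightarrow> real
                          \<Rightarrow> (nat \<times> nat) list \<Rightarrow> bool" where
  "admissible M N Z v m pinit dP h \<longleftrightarrow>
     (let t = length h in 1 \<le> t
       \<and> fst (h ! 0) \<le> sigma v m pinit dP 0
       \<and> (\<forall>r. 1 \<le> r \<longrightarrow> r < t \<longrightarrow> fst (h ! r) \<le> fst (h ! (r - 1)))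
       \<and> (\<forall>r. r + 2 \<le> t \<longrightarrow> m < fst (h ! r) + snd (h ! r))
       \<and> 0 < measure M (hist_event M N Z pinit dP h))"

definition markov_upto :: "'a measure \<Rightarrow> (nat \<Rightarrow> 'a \<Rightarrow> nat) \<Rightarrow> nat \<Rightarrow> bool" where
  "markov_upto M X T \<longleftrightarrow>
     (\<forall>t. 1 \<le> t \<longrightarrow> t \<le> T \<longrightarrow> (\<forall>ds. length ds = Suc t \<longrightarrow>
        (let A = {\<omega> \<in> space M. \<forall>r<t. X r \<omega> = ds ! r};
             B = {\<omega> \<in> space M. X (t - 1) \<omega> = ds ! (t - 1)} in
         0 < measure M A \<longrightarrow>
         measure M {\<omega> \<in> A. X t \<omega> = ds ! t} / measure M A
           = measure M {\<omega> \<in> B. X t \<omega> = ds ! t} / measure M B)))"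

end

theory Submission
  imports Defs
begin

text \<open>Backward induction on the round. For a strategy \<open>s\<close> and a history \<open>h\<close> let \<open>payoff_on s h\<close>
  be the integral of the utility of \<open>s\<close> over the event \<open>E h\<close> that the opponent's demands follow
  \<open>h\<close>. Once the auction is decided along \<open>h\<close> (it stopped in the last round of \<open>h\<close>, or the horizon
  is reached) the utility is constant on \<open>E h\<close> and equals \<open>\<phi>\<^sup>v\<close>. Otherwise \<open>payoff_on s h\<close> is
  the sum of \<open>payoff_on s h'\<close> over the one-round extensions \<open>h'\<close> of \<open>h\<close> by the bid of \<open>s\<close>, and
  the Markov property makes \<open>P(E h') / P(E h)\<close> a value of the kernel \<open>K\<^sub>t\<close>. By induction
  \<open>payoff_on s h \<le> P(E h) \<phi>\<^sup>v\<close>, with equality for the Bellman strategy, which bids a maximiser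
  of the one-round look-ahead. Dividing by \<open>P(E h)\<close> gives the conditional statement; the
  unconditional one is the same step taken from the empty history.\<close>

lemma minargmax_le: "minargmax k f \<le> k"
  and minargmax_max: "u \<le> k \<Longrightarrow> f u \<le> f (minargmax k f)"
proof -
  have "Max (f ` {..k}) \<in> f ` {..k}" by (intro Max_in) auto
  then obtain u0 where "u0 \<le> k" "f u0 = Max (f ` {..k})" by (metis atMost_iff imageE)
  then have "\<exists>u. u \<le> k \<and> (\<forall>u'\<le>k. f u' \<le> f u)" by auto
  then have "minargmax k f \<le> k \<and> (\<forall>u'\<le>k. f u' \<le> f (minargmax k f))"
    unfolding minargmax_def by (rule LeastI_ex)
  then show "minargmax k f \<le> k" "u \<le> k \<Longrightarrow> f u \<le> f (minargmax k f)" by auto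
qed

lemma minargmax_eq_Max: "f (minargmax k f) = Max (f ` {..k})"
  using minargmax_le minargmax_max by (intro antisym Max_ge Max.boundedI) auto

lemma length_hist [simp]: "length (hist N Z pinit dP pre s \<omega> r) = r"
  by (induction r) (auto simp: Let_def)

lemma take_hist: "r \<le> r' \<Longrightarrow> take r (hist N Z pinit dP pre s \<omega> r') = hist N Z pinit dP pre s \<omega> r"
  by (induction r') (auto simp: Let_def le_Suc_eq)

lemma hist_prescribed:
  assumes "\<forall>r<length h. demand N Z (price pinit dP r) \<omega> = snd (h ! r)" and "r \<le> length h"
  shows "hist N Z pinit dP (map fst h) s \<omega> r = take r h"
  using assms(2) by (induction r) (auto simp: Let_def take_Suc_conv_app_nth assms(1))

lemma hist_append_own_bid:
  assumes "\<forall>r<length h. demand N Z (price pinit dP r) \<omega> = snd (h ! r)"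
  shows "hist N Z pinit dP (map fst h @ [s (length h) h]) s \<omega> r = hist N Z pinit dP (map fst h) s \<omega> r"
proof (induction r)
  case (Suc r)
  show ?case
  proof (cases "r = length h")
    case True
    then have "hist N Z pinit dP (map fst h) s \<omega> r = h"
      using hist_prescribed[OF assms, of r s] by simp
    then show ?thesis using Suc True by (simp add: Let_def nth_append)
  qed (use Suc in \<open>simp add: Let_def nth_append\<close>)
qed simp

lemma demand_le: "demand N Z p \<omega> \<le> N"
proof -
  have "demand N Z p \<omega> \<le> (\<Sum>j\<in>{1..N}. 1)"
    unfolding demand_def by (rule sum_mono) auto
  then show ?thesis by simp
qed

locale bellman_auction = prob_space M
  for M :: "'a measure" +
  fixes m N :: nat and pinit dP :: real and v :: "nat \<Rightarrow> real"
    and Z :: "nat \<Rightarrow> 'a \<Rightarrow> real" and K :: "nat \<Rightarrow> nat \<Rightarrow> nat \<Rightarrow> real"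
  assumes Z_measurable: "\<forall>j\<in>{1..N}. Z j \<in> borel_measurable M"
    and Rbar_pos: "1 \<le> \<lceil>(v 1 - pinit) / dP\<rceil>"
    and K_conditional: "\<forall>t\<ge>1. \<forall>d\<le>N. \<forall>d'\<le>N.
        0 < measure M {\<omega> \<in> space M. demand N Z (price pinit dP (t - 1)) \<omega> = d} \<longrightarrow>
        K t d d' = measure M {\<omega> \<in> space M. demand N Z (price pinit dP (t - 1)) \<omega> = d
                                         \<and> demand N Z (price pinit dP t) \<omega> = d'}
                   / measure M {\<omega> \<in> space M. demand N Z (price pinit dP (t - 1)) \<omega> = d}"
    and markov: "markov_upto M (\<lambda>t \<omega>. demand N Z (price pinit dP t) \<omega>) (Rbar v pinit dP)"
begin

abbreviation "\<delta> t \<equiv> demand N Z (price pinit dP t)"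
abbreviation "R \<equiv> Rbar v pinit dP"
abbreviation "E h \<equiv> hist_event M N Z pinit dP h"
abbreviation "U pre s \<equiv> utility N Z v m pinit dP pre s"
abbreviation "\<sigma>\<^sub>0 \<equiv> sigma v m pinit dP 0"
abbreviation "\<Phi> t k d \<equiv> phi v m N pinit dP K t k d"
abbreviation "\<Phi>_last h \<equiv> \<Phi> (length h) (fst (last h)) (snd (last h))"
abbreviation "Q t d u \<equiv> \<Sum>d'\<le>N. K t d d' * \<Phi> (Suc t) u d'"
abbreviation "Q\<^sub>0 u \<equiv> \<Sum>d'\<le>N. p0 M N Z pinit dP d' * \<Phi> 1 u d'"
abbreviation "valid s \<equiv> valid_strategy v m pinit dP s"
abbreviation "\<beta> \<equiv> bellman M Z v m N pinit dP K"

lemma Rbar_ge_1: "1 \<le> R"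
  using Rbar_pos unfolding Rbar_def by linarith

lemma sigma0_le: "\<sigma>\<^sub>0 \<le> m"
  unfolding sigma_def by (rule minargmax_le)

subsection \<open>Measurability and integrability\<close>

lemma measurable_demand [measurable]: "demand N Z p \<in> measurable M (count_space UNIV)"
proof -
  have "(\<lambda>\<omega>. real (demand N Z p \<omega>)) = (\<lambda>\<omega>. \<Sum>j\<in>{1..N}. indicator {p<..} (Z j \<omega>))"
    unfolding demand_def by (auto simp: indicator_def)
  also have "\<dots> \<in> borel_measurable M"
    using Z_measurable by (intro borel_measurable_sum measurable_compose[OF _ borel_measurable_indicator]) auto
  finally have real_meas: "(\<lambda>\<omega>. real (demand N Z p \<omega>)) \<in> borel_measurable M" .
  have "demand N Z p -` {a} \<inter> space M = {\<omega>\<in>space M. real (demand N Z p \<omega>) = real a}" for a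
    by auto
  also have "\<dots> a \<in> sets M" for a
    using real_meas by measurable
  finally show ?thesis
    unfolding measurable_count_space_eq2_countable by auto
qed

lemma measurable_hist: "(\<lambda>\<omega>. hist N Z pinit dP pre s \<omega> r) \<in> measurable M (count_space UNIV)"
proof (induction r)
  case (Suc r)
  let ?F = "\<lambda>(h, d). h @ [(if r < length pre then pre ! r else s r h, d)]"
  have "(\<lambda>\<omega>. (hist N Z pinit dP pre s \<omega> r, \<delta> r \<omega>))
          \<in> measurable M (count_space UNIV \<Otimes>\<^sub>M count_space UNIV)"
    using Suc by (intro measurable_Pair) auto
  then have "(\<lambda>\<omega>. (hist N Z pinit dP pre s \<omega> r, \<delta> r \<omega>)) \<in> measurable M (count_space UNIV)"
    by (simp add: pair_measure_countable)
  then have "(\<lambda>\<omega>. ?F (hist N Z pinit dP pre s \<omega> r, \<delta> r \<omega>)) \<in> measurable M (count_space UNIV)"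
    by (rule measurable_compose) simp
  then show ?case by (simp add: Let_def)
qed simp

lemma borel_measurable_utility: "U pre s \<in> borel_measurable M"
proof -
  define G where "G H = (let stop = {r. r < R \<and> fst (H ! r) + snd (H ! r) \<le> m}
      in if stop = {} then 0
         else (let \<tau> = Min stop in v (fst (H ! \<tau>)) - real (fst (H ! \<tau>)) * price pinit dP \<tau>))" for H
  have "U pre s = (\<lambda>\<omega>. G (hist N Z pinit dP pre s \<omega> R))"
    unfolding utility_def G_def by (simp add: Let_def)
  also have "\<dots> \<in> borel_measurable M"
    using measurable_hist by (rule measurable_compose) simp
  finally show ?thesis .
qed

lemma sets_hist_event [measurable]: "E h \<in> sets M"
  unfolding hist_event_def by measurable

lemma valid_strategy_first_bid: "valid s \<Longrightarrow> s 0 [] \<le> \<sigma>\<^sub>0"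
  using Rbar_ge_1 unfolding valid_strategy_def by (auto dest: spec[of _ 0])

lemma valid_strategy_later_bid:
  "valid s \<Longrightarrow> h \<noteq> [] \<Longrightarrow> length h < R \<Longrightarrow> s (length h) h \<le> fst (last h)"
  unfolding valid_strategy_def by auto

lemma valid_strategy_bid_le:
  assumes "valid s" "length h < R" "\<forall>x\<in>set (map fst h). x \<le> m"
  shows "s (length h) h \<le> m"
proof (cases "h = []")
  case True
  then show ?thesis using valid_strategy_first_bid[OF assms(1)] sigma0_le by simp
next
  case False
  then have "fst (last h) \<le> m" using assms(3) by auto
  then show ?thesis using valid_strategy_later_bid[OF assms(1) False assms(2)] by simp
qed

lemma hist_bids_le:
  assumes "valid s" "\<forall>x\<in>set pre. x \<le> m" "r \<le> R"
  shows "\<forall>p\<in>set (hist N Z pinit dP pre s \<omega> r). fst p \<le> m"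
  using assms(3)
proof (induction r)
  case (Suc r)
  let ?h = "hist N Z pinit dP pre s \<omega> r"
  have "s r ?h \<le> m"
    using valid_strategy_bid_le[OF assms(1), of ?h] Suc by simp
  then show ?case using Suc assms(2) by (auto simp: Let_def)
qed simp

definition "utility_bound = (\<Sum>u\<le>m. \<Sum>\<tau><R. \<bar>v u - real u * price pinit dP \<tau>\<bar>)"

lemma abs_utility_le:
  assumes "valid s" "\<forall>x\<in>set pre. x \<le> m"
  shows "\<bar>U pre s \<omega>\<bar> \<le> utility_bound"
proof -
  let ?H = "hist N Z pinit dP pre s \<omega> R"
  let ?stop = "{r. r < R \<and> fst (?H ! r) + snd (?H ! r) \<le> m}"
  have bound_nonneg: "0 \<le> utility_bound" unfolding utility_bound_def by (intro sum_nonneg) auto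
  show ?thesis
  proof (cases "?stop = {}")
    case True
    then show ?thesis using bound_nonneg unfolding utility_def by (simp add: Let_def)
  next
    case False
    define \<tau> where "\<tau> = Min ?stop"
    have "finite ?stop" by simp
    then have "\<tau> \<in> ?stop" unfolding \<tau>_def using False by (rule Min_in)
    then have \<tau>: "\<tau> < R" by simp
    let ?u = "fst (?H ! \<tau>)"
    have u: "?u \<le> m" using hist_bids_le[OF assms, of R \<omega>] \<tau> by simp
    have "\<bar>v ?u - real ?u * price pinit dP \<tau>\<bar> \<le> (\<Sum>\<tau>'<R. \<bar>v ?u - real ?u * price pinit dP \<tau>'\<bar>)"
      by (rule member_le_sum[of \<tau>]) (use \<tau> in auto)
    also have "\<dots> \<le> utility_bound"
      unfolding utility_bound_def by (rule member_le_sum[of ?u]) (use u in \<open>auto intro: sum_nonneg\<close>)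
    moreover have "U pre s \<omega> = v ?u - real ?u * price pinit dP \<tau>"
      unfolding utility_def Let_def \<tau>_def by (simp only: if_not_P[OF False])
    ultimately show ?thesis by simp
  qed
qed

definition "payoff_on s h = (\<integral>\<omega>. indicator (E h) \<omega> * U (map fst h) s \<omega> \<partial>M)"

lemma integrable_payoff_on:
  assumes "valid s" "\<forall>x\<in>set (map fst h). x \<le> m"
  shows "integrable M (\<lambda>\<omega>. indicator (E h) \<omega> * U (map fst h) s \<omega>)"
proof (rule integrable_const_bound[where B = utility_bound])
  have "\<bar>indicator (E h) \<omega> * U (map fst h) s \<omega>\<bar> \<le> \<bar>U (map fst h) s \<omega>\<bar>" for \<omega>
    by (simp add: indicator_def)
  then show "AE \<omega> in M. norm (indicator (E h) \<omega> * U (map fst h) s \<omega>) \<le> utility_bound"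
    using abs_utility_le[OF assms] by (auto intro: order_trans)
  show "(\<lambda>\<omega>. indicator (E h) \<omega> * U (map fst h) s \<omega>) \<in> borel_measurable M"
    using borel_measurable_utility by measurable
qed

lemma payoff_on_null:
  assumes "measure M (E h) = 0"
  shows "payoff_on s h = 0"
proof -
  have "E h \<in> null_sets M" using assms by (simp add: null_sets_def emeasure_eq_measure)
  then have "AE \<omega> in M. \<omega> \<notin> E h" by (rule AE_not_in)
  then have "AE \<omega> in M. indicator (E h) \<omega> * U (map fst h) s \<omega> = 0"
    by eventually_elim simp
  then show ?thesis unfolding payoff_on_def by (rule integral_eq_zero_AE)
qed

lemma payoff_on_const:
  assumes "\<And>\<omega>. \<omega> \<in> E h \<Longrightarrow> U (map fst h) s \<omega> = c"
  shows "payoff_on s h = measure M (E h) * c"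
proof -
  have "payoff_on s h = (\<integral>\<omega>. indicator (E h) \<omega> * c \<partial>M)"
    unfolding payoff_on_def by (intro Bochner_Integration.integral_cong) (auto simp: indicator_def assms)
  then show ?thesis by simp
qed

lemma hist_event_snoc: "E (h @ [(u, d')]) = {\<omega> \<in> E h. \<delta> (length h) \<omega> = d'}"
  unfolding hist_event_def by (auto simp: nth_append less_Suc_eq)

lemma utility_append_own_bid:
  "\<omega> \<in> E h \<Longrightarrow> U (map fst h @ [s (length h) h]) s \<omega> = U (map fst h) s \<omega>"
  unfolding utility_def hist_event_def using hist_append_own_bid[of h N Z pinit dP \<omega> s] by simp

text \<open>On \<open>E h\<close> the next demand takes exactly one of the values \<open>0..N\<close>, so the indicator of
  \<open>E h\<close> is the sum of the indicators of the events of the extended histories.\<close>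
lemma payoff_on_split:
  assumes "valid s" "\<forall>x\<in>set (map fst h). x \<le> m" "length h < R"
  shows "payoff_on s h = (\<Sum>d'\<le>N. payoff_on s (h @ [(s (length h) h, d')]))"
proof -
  define u where "u = s (length h) h"
  have u: "u \<le> m" unfolding u_def using valid_strategy_bid_le[OF assms(1,3,2)] .
  have pointwise: "indicator (E h) \<omega> * U (map fst h) s \<omega>
      = (\<Sum>d'\<le>N. indicator (E (h @ [(u, d')])) \<omega> * U (map fst (h @ [(u, d')])) s \<omega>)" for \<omega>
  proof (cases "\<omega> \<in> E h")
    case True
    have "(\<Sum>d'\<le>N. indicator (E (h @ [(u, d')])) \<omega> * U (map fst (h @ [(u, d')])) s \<omega>)
        = (\<Sum>d'\<le>N. if d' = \<delta> (length h) \<omega> then U (map fst h @ [u]) s \<omega> else 0)"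
      using True by (intro sum.cong) (auto simp: hist_event_snoc indicator_def)
    also have "\<dots> = U (map fst h) s \<omega>"
      using demand_le[of N Z "price pinit dP (length h)" \<omega>] utility_append_own_bid[OF True]
      unfolding u_def by simp
    finally show ?thesis using True by simp
  qed (simp add: hist_event_snoc indicator_def)
  have "payoff_on s h
      = (\<integral>\<omega>. (\<Sum>d'\<le>N. indicator (E (h @ [(u, d')])) \<omega> * U (map fst (h @ [(u, d')])) s \<omega>) \<partial>M)"
    unfolding payoff_on_def pointwise ..
  also have "\<dots> = (\<Sum>d'\<le>N. payoff_on s (h @ [(u, d')]))"
    unfolding payoff_on_def using assms(2) u
    by (intro Bochner_Integration.integral_sum integrable_payoff_on[OF assms(1)]) auto
  finally show ?thesis unfolding u_def .
qed

subsection \<open>The Markov step\<close>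

lemma markov_hist_event:
  assumes "1 \<le> length h" "length h < R" "0 < measure M (E h)"
  shows "measure M (E (h @ [(u, d')])) / measure M (E h)
       = measure M {\<omega> \<in> space M. \<delta> (length h - 1) \<omega> = snd (last h) \<and> \<delta> (length h) \<omega> = d'}
         / measure M {\<omega> \<in> space M. \<delta> (length h - 1) \<omega> = snd (last h)}"
proof -
  define t where "t = length h"
  define ds where "ds = map snd h @ [d']"
  have "h \<noteq> []" using assms(1) by auto
  then have ds: "length ds = Suc t" "ds ! (t - 1) = snd (last h)" "ds ! t = d'"
    unfolding ds_def t_def by (auto simp: nth_append last_conv_nth)
  let ?A = "{\<omega> \<in> space M. \<forall>r<t. \<delta> r \<omega> = ds ! r}"
  let ?B = "{\<omega> \<in> space M. \<delta> (t - 1) \<omega> = ds ! (t - 1)}"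
  have A: "?A = E h"
    unfolding hist_event_def ds_def t_def by (auto simp: nth_append)
  have "0 < measure M ?A \<longrightarrow> measure M {\<omega> \<in> ?A. \<delta> t \<omega> = ds ! t} / measure M ?A
      = measure M {\<omega> \<in> ?B. \<delta> t \<omega> = ds ! t} / measure M ?B"
    using markov[unfolded markov_upto_def Let_def, rule_format, of t ds] assms(1,2) ds(1)
    unfolding t_def by simp
  then have "measure M {\<omega> \<in> E h. \<delta> t \<omega> = ds ! t} / measure M (E h)
      = measure M {\<omega> \<in> ?B. \<delta> t \<omega> = ds ! t} / measure M ?B"
    unfolding A using assms(3) by blast
  moreover have "{\<omega> \<in> E h. \<delta> t \<omega> = ds ! t} = E (h @ [(u, d')])"
    using ds(3) by (simp add: hist_event_snoc t_def)
  moreover have "{\<omega> \<in> ?B. \<delta> t \<omega> = ds ! t}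
      = {\<omega> \<in> space M. \<delta> (t - 1) \<omega> = snd (last h) \<and> \<delta> t \<omega> = d'}"
    using ds by auto
  moreover have "?B = {\<omega> \<in> space M. \<delta> (t - 1) \<omega> = snd (last h)}"
    using ds by simp
  ultimately show ?thesis unfolding t_def by simp
qed

lemma hist_event_subset_last:
  assumes "h \<noteq> []"
  shows "E h \<subseteq> {\<omega> \<in> space M. \<delta> (length h - 1) \<omega> = snd (last h)}"
  using assms unfolding hist_event_def by (auto simp: last_conv_nth)

lemma measure_hist_event_snoc:
  assumes "1 \<le> length h" "length h < R" "0 < measure M (E h)" "d' \<le> N"
  shows "measure M (E (h @ [(u, d')])) = measure M (E h) * K (length h) (snd (last h)) d'"
proof -
  define t where "t = length h"
  define d where "d = snd (last h)"
  let ?B = "{\<omega> \<in> space M. \<delta> (t - 1) \<omega> = d}"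
  have sub: "E h \<subseteq> ?B"
    unfolding t_def d_def by (rule hist_event_subset_last) (use assms(1) in auto)
  have "?B \<in> sets M" by measurable
  then have B: "0 < measure M ?B"
    using finite_measure_mono[OF sub] assms(3) by linarith
  obtain \<omega> where "\<omega> \<in> E h" using assms(3) by (metis equals0I less_irrefl measure_empty)
  then have "d \<le> N" using sub demand_le[of N Z "price pinit dP (t - 1)" \<omega>] by auto
  then have "K t d d' = measure M {\<omega> \<in> space M. \<delta> (t - 1) \<omega> = d \<and> \<delta> t \<omega> = d'} / measure M ?B"
    using K_conditional[rule_format, of t d d'] assms(1,4) B unfolding t_def by simp
  then have "measure M (E (h @ [(u, d')])) / measure M (E h) = K t d d'"
    using markov_hist_event[OF assms(1-3), of u d'] unfolding t_def d_def by simp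
  then show ?thesis
    using assms(3) unfolding t_def d_def by (simp add: divide_eq_eq mult.commute)
qed

definition "live_history h \<longleftrightarrow> 1 \<le> length h \<and> length h \<le> R \<and> (\<forall>x\<in>set (map fst h). x \<le> m)
   \<and> (\<forall>r. r + 2 \<le> length h \<longrightarrow> m < fst (h ! r) + snd (h ! r))"

lemma live_history_snoc:
  assumes "live_history h" "length h < R" "m < fst (last h) + snd (last h)" "u \<le> fst (last h)"
  shows "live_history (h @ [(u, d')])"
proof -
  have h: "h \<noteq> []" using assms(1) unfolding live_history_def by auto
  have "m < fst ((h @ [(u, d')]) ! r) + snd ((h @ [(u, d')]) ! r)" if "r + 2 \<le> Suc (length h)" for r
  proof (cases "r = length h - 1")
    case True
    then show ?thesis using h assms(3) by (simp add: nth_append last_conv_nth)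
  next
    case False
    then show ?thesis using that assms(1) unfolding live_history_def by (simp add: nth_append)
  qed
  moreover have "fst (last h) \<le> m" using h assms(1) unfolding live_history_def by auto
  ultimately show ?thesis using assms unfolding live_history_def by auto
qed

lemma take_hist_on_event:
  assumes "\<omega> \<in> E h" "length h \<le> R"
  shows "take (length h) (hist N Z pinit dP (map fst h) s \<omega> R) = h"
  using assms take_hist[OF assms(2), of N Z pinit dP "map fst h" s \<omega>]
    hist_prescribed[of h N Z pinit dP \<omega> "length h" s]
  unfolding hist_event_def by simp

lemma phi_stop: "k + d \<le> m \<Longrightarrow> \<Phi> t k d = v k - real k * price pinit dP (t - 1)"
  unfolding phi_def by (cases "R - t") simp_all

lemma phi_horizon: "m < k + d \<Longrightarrow> \<Phi> R k d = 0"
  unfolding phi_def by simp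

lemma phi_step:
  assumes "t < R" "m < k + d"
  shows "\<Phi> t k d = Max (Q t d ` {..k})"
proof -
  have "R - t = Suc (R - Suc t)" using assms(1) by simp
  then show ?thesis using assms(2) unfolding phi_def by simp
qed

text \<open>Along a live history no round before the last one stops the auction.\<close>
lemma utility_decided:
  assumes "live_history h" "\<omega> \<in> E h" and decided: "fst (last h) + snd (last h) \<le> m \<or> length h = R"
  shows "U (map fst h) s \<omega> = \<Phi>_last h"
proof -
  define t where "t = length h"
  let ?H = "hist N Z pinit dP (map fst h) s \<omega> R"
  let ?stop = "{r. r < R \<and> fst (?H ! r) + snd (?H ! r) \<le> m}"
  have t: "1 \<le> t" "t \<le> R" "h \<noteq> []" using assms(1) unfolding live_history_def t_def by auto
  have H: "r < t \<Longrightarrow> ?H ! r = h ! r" for r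
    using take_hist_on_event[OF assms(2) t(2)[unfolded t_def]] unfolding t_def by (metis nth_take)
  have last: "?H ! (t - 1) = last h" using H t by (simp add: last_conv_nth t_def)
  have early: "r \<notin> ?stop" if "r + 2 \<le> t" for r
    using that H[of r] assms(1) unfolding live_history_def t_def by auto
  show ?thesis
  proof (cases "fst (last h) + snd (last h) \<le> m")
    case True
    have "t - 1 \<in> ?stop" using True last t by simp
    moreover have "\<forall>r\<in>?stop. t - 1 \<le> r" using early by force
    ultimately have "Min ?stop = t - 1" by (intro Min_eqI) auto
    moreover have "?stop \<noteq> {}" using \<open>t - 1 \<in> ?stop\<close> by blast
    ultimately have "U (map fst h) s \<omega> = v (fst (last h)) - real (fst (last h)) * price pinit dP (t - 1)"
      unfolding utility_def Let_def by (simp only: if_False last)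
    then show ?thesis using phi_stop[OF True] by (simp add: t_def)
  next
    case False
    then have "t = R" using decided unfolding t_def by simp
    have "?stop = {}"
    proof (intro equalityI subsetI)
      fix r assume r: "r \<in> ?stop"
      show "r \<in> {}"
      proof (cases "r = t - 1")
        case True
        then show ?thesis using r last False by simp
      next
        case False
        moreover have "r < t" using r \<open>t = R\<close> by simp
        ultimately have "r + 2 \<le> t" by arith
        then show ?thesis using early r by blast
      qed
    qed simp
    then show ?thesis
      unfolding utility_def Let_def using phi_horizon False \<open>t = R\<close> by (simp add: t_def)
  qed
qed

lemma payoff_on_decided:
  assumes "live_history h"
    and "measure M (E h) = 0 \<or> fst (last h) + snd (last h) \<le> m \<or> length h = R"
  shows "payoff_on s h = measure M (E h) * \<Phi>_last h"
  using assms payoff_on_null payoff_on_const[OF utility_decided] by fastforce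

lemma sum_measure_snoc_phi:
  assumes "1 \<le> length h" "length h < R" "0 < measure M (E h)"
  shows "(\<Sum>d'\<le>N. measure M (E (h @ [(u, d')])) * \<Phi> (Suc (length h)) u d')
       = measure M (E h) * Q (length h) (snd (last h)) u"
  using measure_hist_event_snoc[OF assms] by (simp add: sum_distrib_left mult.assoc)

subsection \<open>Backward induction\<close>

lemma payoff_on_le_phi:
  assumes "valid s"
  shows "live_history h \<Longrightarrow> payoff_on s h \<le> measure M (E h) * \<Phi>_last h"
proof (induction "R - length h" arbitrary: h rule: less_induct)
  case less
  show ?case
  proof (cases "measure M (E h) = 0 \<or> fst (last h) + snd (last h) \<le> m \<or> length h = R")
    case True
    then show ?thesis using payoff_on_decided[OF less.prems] by simp
  next
    case False
    define t where "t = length h"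
    define k where "k = fst (last h)"
    define d where "d = snd (last h)"
    define u where "u = s t h"
    have t: "1 \<le> t" "t < R" "h \<noteq> []" and P: "0 < measure M (E h)"
      using less.prems False unfolding live_history_def t_def by (auto simp: zero_less_measure_iff)
    have u: "u \<le> k"
      using valid_strategy_later_bid[OF assms t(3)] t(2) unfolding u_def t_def k_def .
    have "payoff_on s h = (\<Sum>d'\<le>N. payoff_on s (h @ [(u, d')]))"
      using payoff_on_split[OF assms] less.prems t unfolding live_history_def u_def t_def by simp
    also have "\<dots> \<le> (\<Sum>d'\<le>N. measure M (E (h @ [(u, d')])) * \<Phi> (Suc t) u d')"
    proof (intro sum_mono)
      fix d'
      have "live_history (h @ [(u, d')])"
        using live_history_snoc[OF less.prems] False t u unfolding t_def k_def by simp
      then show "payoff_on s (h @ [(u, d')]) \<le> measure M (E (h @ [(u, d')])) * \<Phi> (Suc t) u d'"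
        using less.hyps[of "h @ [(u, d')]"] t unfolding t_def by simp
    qed
    also have "\<dots> = measure M (E h) * Q t d u"
      using sum_measure_snoc_phi t P unfolding t_def d_def by simp
    also have "\<dots> \<le> measure M (E h) * \<Phi> t k d"
      using P u False t phi_step[of t k d] unfolding k_def d_def
      by (intro mult_left_mono Max_ge) auto
    finally show ?thesis unfolding t_def k_def d_def .
  qed
qed

lemma valid_bellman: "valid \<beta>"
  unfolding valid_strategy_def bellman_def beta0_def betaT_def by (auto intro: minargmax_le)

lemma payoff_on_bellman: "live_history h \<Longrightarrow> payoff_on \<beta> h = measure M (E h) * \<Phi>_last h"
proof (induction "R - length h" arbitrary: h rule: less_induct)
  case less
  show ?case
  proof (cases "measure M (E h) = 0 \<or> fst (last h) + snd (last h) \<le> m \<or> length h = R")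
    case True
    then show ?thesis using payoff_on_decided[OF less.prems] by simp
  next
    case False
    define t where "t = length h"
    define k where "k = fst (last h)"
    define d where "d = snd (last h)"
    define u where "u = \<beta> t h"
    have t: "1 \<le> t" "t < R" "h \<noteq> []" and P: "0 < measure M (E h)"
      using less.prems False unfolding live_history_def t_def by (auto simp: zero_less_measure_iff)
    have u: "u = minargmax k (Q t d)"
      using t(3) unfolding u_def bellman_def betaT_def k_def d_def by simp
    have "payoff_on \<beta> h = (\<Sum>d'\<le>N. payoff_on \<beta> (h @ [(u, d')]))"
      using payoff_on_split[OF valid_bellman] less.prems t unfolding live_history_def u_def t_def by simp
    also have "\<dots> = (\<Sum>d'\<le>N. measure M (E (h @ [(u, d')])) * \<Phi> (Suc t) u d')"
    proof (intro sum.cong refl)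
      fix d'
      have "live_history (h @ [(u, d')])"
        using live_history_snoc[OF less.prems] False t minargmax_le[of k "Q t d"] unfolding t_def k_def u by simp
      then show "payoff_on \<beta> (h @ [(u, d')]) = measure M (E (h @ [(u, d')])) * \<Phi> (Suc t) u d'"
        using less.hyps[of "h @ [(u, d')]"] t unfolding t_def by simp
    qed
    also have "\<dots> = measure M (E h) * Q t d u"
      using sum_measure_snoc_phi t P unfolding t_def d_def by simp
    also have "\<dots> = measure M (E h) * \<Phi> t k d"
      using False t phi_step[of t k d] minargmax_eq_Max[of "Q t d" k] unfolding u k_def d_def by simp
    finally show ?thesis unfolding t_def k_def d_def .
  qed
qed

lemma expU_split:
  assumes "valid s"
  shows "expU M N Z v m pinit dP s = (\<Sum>d'\<le>N. payoff_on s [(s 0 [], d')])"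
proof -
  have "expU M N Z v m pinit dP s = payoff_on s []"
    unfolding expU_def payoff_on_def hist_event_def by (intro Bochner_Integration.integral_cong) auto
  then show ?thesis using payoff_on_split[OF assms, of "[]"] Rbar_ge_1 by simp
qed

lemma measure_hist_event_singleton: "measure M (E [(u, d')]) = p0 M N Z pinit dP d'"
  unfolding p0_def hist_event_def by simp

lemma live_history_singleton: "u \<le> m \<Longrightarrow> live_history [(u, d')]"
  unfolding live_history_def using Rbar_ge_1 by auto

lemma expU_le_phi0:
  assumes "valid s"
  shows "expU M N Z v m pinit dP s \<le> phi0 M Z v m N pinit dP K \<sigma>\<^sub>0"
proof -
  have u: "s 0 [] \<le> \<sigma>\<^sub>0" by (rule valid_strategy_first_bid[OF assms])
  have "expU M N Z v m pinit dP s \<le> Q\<^sub>0 (s 0 [])"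
    unfolding expU_split[OF assms] using payoff_on_le_phi[OF assms live_history_singleton] u sigma0_le
    by (intro sum_mono) (simp add: measure_hist_event_singleton)
  also have "\<dots> \<le> phi0 M Z v m N pinit dP K \<sigma>\<^sub>0"
    unfolding phi0_def using u by (intro Max_ge) auto
  finally show ?thesis .
qed

lemma expU_bellman: "expU M N Z v m pinit dP \<beta> = phi0 M Z v m N pinit dP K \<sigma>\<^sub>0"
proof -
  have u: "\<beta> 0 [] = minargmax \<sigma>\<^sub>0 Q\<^sub>0"
    unfolding bellman_def beta0_def by simp
  have "expU M N Z v m pinit dP \<beta> = Q\<^sub>0 (\<beta> 0 [])"
    unfolding expU_split[OF valid_bellman] using payoff_on_bellman[OF live_history_singleton]
      valid_strategy_first_bid[OF valid_bellman] sigma0_le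
    by (intro sum.cong) (simp_all add: measure_hist_event_singleton)
  then show ?thesis unfolding phi0_def u using minargmax_eq_Max[of Q\<^sub>0 \<sigma>\<^sub>0] by simp
qed

lemma admissible_imp_live_history:
  assumes "admissible M N Z v m pinit dP h" "length h \<le> R"
  shows "live_history h"
proof -
  have adm: "1 \<le> length h" "fst (h ! 0) \<le> \<sigma>\<^sub>0"
    "\<And>r. 1 \<le> r \<Longrightarrow> r < length h \<Longrightarrow> fst (h ! r) \<le> fst (h ! (r - 1))"
    "\<forall>r. r + 2 \<le> length h \<longrightarrow> m < fst (h ! r) + snd (h ! r)"
    using assms(1) unfolding admissible_def Let_def by auto
  have "r < length h \<Longrightarrow> fst (h ! r) \<le> \<sigma>\<^sub>0" for r
    by (induction r) (use adm(2) adm(3) in \<open>fastforce+\<close>)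
  then have "\<forall>x\<in>set (map fst h). x \<le> m"
    using sigma0_le by (fastforce simp: in_set_conv_nth)
  then show ?thesis unfolding live_history_def using adm assms(2) by auto
qed

lemma condU_le_phi:
  assumes "valid s" "admissible M N Z v m pinit dP h" "length h \<le> R"
  shows "condU M N Z v m pinit dP s h \<le> \<Phi>_last h"
proof -
  have "0 < measure M (E h)" using assms(2) unfolding admissible_def Let_def by auto
  then show ?thesis
    using payoff_on_le_phi[OF assms(1) admissible_imp_live_history[OF assms(2,3)]]
    unfolding condU_def payoff_on_def[symmetric] by (simp add: divide_le_eq mult.commute)
qed

lemma condU_bellman:
  assumes "admissible M N Z v m pinit dP h" "length h \<le> R"
  shows "condU M N Z v m pinit dP \<beta> h = \<Phi>_last h"
proof -
  have "0 < measure M (E h)" using assms(1) unfolding admissible_def Let_def by auto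
  then show ?thesis
    using payoff_on_bellman[OF admissible_imp_live_history[OF assms]]
    unfolding condU_def payoff_on_def[symmetric] by simp
qed

end

text \<open>Only measurability of the \<open>Z\<^sub>j\<close>, \<open>R\<close> \<open>\<ge>\<close> 1, the transition law \<open>K\<close> and the Markov property
  are needed.\<close>
theorem mainTheorem7:
  fixes n m N :: nat and pinit dP :: real and v :: "nat \<Rightarrow> real"
    and M :: "'a measure" and Z :: "nat \<Rightarrow> 'a \<Rightarrow> real"
    and K :: "nat \<Rightarrow> nat \<Rightarrow> nat \<Rightarrow> real"
  assumes n2: "2 \<le> n" and m1: "1 \<le> m" and N_def: "N = (n - 1) * m"
    and pinit: "0 \<le> pinit" and dP: "0 < dP"
    and val: "valuation_ok v m"
    and Rbar1: "1 \<le> \<lceil>(v 1 - pinit) / dP\<rceil>"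
    and P: "prob_space M"
    and Zmeas: "\<forall>j\<in>{1..N}. Z j \<in> borel_measurable M"
    and Zord: "AE \<omega> in M. (\<forall>i j. 1 \<le> i \<longrightarrow> i \<le> j \<longrightarrow> j \<le> N \<longrightarrow> Z j \<omega> \<le> Z i \<omega>)
                          \<and> (\<forall>j\<in>{1..N}. 0 \<le> Z j \<omega>)"
    and Kprob: "\<forall>t\<ge>1. \<forall>d\<le>N. (\<forall>d'\<le>N. 0 \<le> K t d d' \<and> (d < d' \<longrightarrow> K t d d' = 0))
                               \<and> (\<Sum>d'\<le>d. K t d d') = 1"
    and Kcond: "\<forall>t\<ge>1. \<forall>d\<le>N. \<forall>d'\<le>N.
        0 < measure M {\<omega> \<in> space M. demand N Z (price pinit dP (t - 1)) \<omega> = d} \<longrightarrow>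
        K t d d' = measure M {\<omega> \<in> space M. demand N Z (price pinit dP (t - 1)) \<omega> = d
                                         \<and> demand N Z (price pinit dP t) \<omega> = d'}
                   / measure M {\<omega> \<in> space M. demand N Z (price pinit dP (t - 1)) \<omega> = d}"
    and MP: "markov_upto M (\<lambda>t \<omega>. demand N Z (price pinit dP t) \<omega>) (Rbar v pinit dP)"
  shows "expU M N Z v m pinit dP (bellman M Z v m N pinit dP K)
           = phi0 M Z v m N pinit dP K (sigma v m pinit dP 0)
       \<and> (\<forall>s. valid_strategy v m pinit dP s \<longrightarrow>
            expU M N Z v m pinit dP s \<le> phi0 M Z v m N pinit dP K (sigma v m pinit dP 0))
       \<and> (\<forall>h. length h \<le> Rbar v pinit dP \<longrightarrow> admissible M N Z v m pinit dP h \<longrightarrow>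
            condU M N Z v m pinit dP (bellman M Z v m N pinit dP K) h
              = phi v m N pinit dP K (length h) (fst (last h)) (snd (last h))
          \<and> (\<forall>s. valid_strategy v m pinit dP s \<longrightarrow>
              condU M N Z v m pinit dP s h
                \<le> phi v m N pinit dP K (length h) (fst (last h)) (snd (last h))))"
proof -
  interpret bellman_auction M m N pinit dP v Z K
    using P Zmeas Rbar1 Kcond MP by (intro bellman_auction.intro bellman_auction_axioms.intro)
  show ?thesis
    using expU_bellman expU_le_phi0 condU_bellman condU_le_phi by blast
qed

end
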